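(* Let $\mathcal{C}$ be an idempotent complete preadditive category that has weak kernels and weak cokernels, and let $n$ be a nonnegative integer. Then $\mathcal{C}$ has $n$-kernels if and only if $\mathcal{C}$ has $n$-cokernels.
   Context: A preadditive category is idempotent complete if every idempotent $e : X \to X$ splits, i.e. there are morphisms $f : Y \to X$ and $g : X \to Y$ with $fg = e$ and $gf = 1_Y$. A weak kernel of $f : A \to B$ is a morphism $k : K \to A$ with $fk = 0$ such that every $u : U \to A$ with $fu = 0$ factors (not necessarily uniquely) as $u = kv$; weak cokernels are defined dually. $\mathcal{C}$ has weak kernels (resp. weak cokernels) if every morphism has one. For $n \geqslant 1$: an $n$-kernel of a morphism $f : A \to A'$ is a sequence of morphisms $B_1 \xrightarrow{b_1} B_2 \xrightarrow{b_2} \cdots \xrightarrow{b_{n-1}} B_n \xrightarrow{b_n} A$ such that for every object $X$ the sequence of abelian groups $0 \to \mathcal{C}(X,B_1) \to \cdots \to \mathcal{C}(X,B_n) \to \mathcal{C}(X,A) \to \mathcal{C}(X,A')$ (induced by composition) is exact; equivalently, $b_1$ is a monomorphism, $b_i$ is a weak kernel of $b_{i+1}$ for $1 \leqslant i \leqslant n-1$, and $b_n$ is a weak kernel of $f$. Dually, an $n$-cokernel of $f : A \to A'$ is a sequence $A' \xrightarrow{c_0} C_1 \xrightarrow{c_1} \cdots \xrightarrow{c_{n-1}} C_n$ such that for every object $X$ the sequence $0 \to \mathcal{C}(C_n,X) \to \cdots \to \mathcal{C}(C_1,X) \to \mathcal{C}(A',X) \to \mathcal{C}(A,X)$ is exact;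 equivalently, $c_{n-1}$ is an epimorphism, $c_0$ is a weak cokernel of $f$ and $c_i$ is a weak cokernel of $c_{i-1}$ for $1 \leqslant i \leqslant n-1$. For $n = 0$: a $0$-kernel of $f : A \to A'$ is a monomorphism $b : B \to A'$ such that $f = bc$ for some split epimorphism $c : A \to B$; a $0$-cokernel of $f$ is an epimorphism $e : A \to C$ such that $f = se$ for some split monomorphism $s : C \to A'$. $\mathcal{C}$ has $n$-kernels (resp. $n$-cokernels) if every morphism in $\mathcal{C}$ has an $n$-kernel (resp. $n$-cokernel). *)

theory Defs
  imports "HOL-Algebra.Group"
begin

text \<open>A (small, set-based) category with abelian-group-enriched hom-sets.
  Objects have type 'o, morphisms type 'm. cat_comp C g f is the composite g after f.\<close>

record ('o, 'm) precat =
  cat_ob   :: "'o set"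
  cat_hom  :: "'o \<Rightarrow> 'o \<Rightarrow> 'm set"
  cat_comp :: "'m \<Rightarrow> 'm \<Rightarrow> 'm"
  cat_id   :: "'o \<Rightarrow> 'm"
  cat_add  :: "'m \<Rightarrow> 'm \<Rightarrow> 'm"
  cat_zero :: "'o \<Rightarrow> 'o \<Rightarrow> 'm"

definition hom_group :: "('o, 'm) precat \<Rightarrow> 'o \<Rightarrow> 'o \<Rightarrow> 'm monoid" where
  "hom_group C A B = \<lparr>carrier = cat_hom C A B, monoid.mult = cat_add C, one = cat_zero C A B\<rparr>"

definition preadditive :: "('o, 'm) precat \<Rightarrow> bool" where
  "preadditive C \<longleftrightarrow>
     (\<forall>A B. (A \<notin> cat_ob C \<or> B \<notin> cat_ob C) \<longrightarrow> cat_hom C A B = {}) \<and>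
     (\<forall>A B A' B' f. f \<in> cat_hom C A B \<and> f \<in> cat_hom C A' B' \<longrightarrow> A = A' \<and> B = B') \<and>
     (\<forall>A B D f g. f \<in> cat_hom C A B \<and> g \<in> cat_hom C B D \<longrightarrow> cat_comp C g f \<in> cat_hom C A D) \<and>
     (\<forall>A B D E f g h. f \<in> cat_hom C A B \<and> g \<in> cat_hom C B D \<and> h \<in> cat_hom C D E \<longrightarrow>
        cat_comp C h (cat_comp C g f) = cat_comp C (cat_comp C h g) f) \<and>
     (\<forall>A \<in> cat_ob C. cat_id C A \<in> cat_hom C A A) \<and>
     (\<forall>A B f. f \<in> cat_hom C A B \<longrightarrow> cat_comp C (cat_id C B) f = f \<and> cat_comp C f (cat_id C A) = f) \<and>
     (\<forall>A \<in> cat_ob C. \<forall>B \<in> cat_ob C. comm_group (hom_group C A B)) \<and>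
     (\<forall>A B D f f' g. f \<in> cat_hom C A B \<and> f' \<in> cat_hom C A B \<and> g \<in> cat_hom C B D \<longrightarrow>
        cat_comp C g (cat_add C f f') = cat_add C (cat_comp C g f) (cat_comp C g f')) \<and>
     (\<forall>A B D f g g'. f \<in> cat_hom C A B \<and> g \<in> cat_hom C B D \<and> g' \<in> cat_hom C B D \<longrightarrow>
        cat_comp C (cat_add C g g') f = cat_add C (cat_comp C g f) (cat_comp C g' f))"

definition cat_mono :: "('o, 'm) precat \<Rightarrow> 'o \<Rightarrow> 'o \<Rightarrow> 'm \<Rightarrow> bool" where
  "cat_mono C A B f \<longleftrightarrow> f \<in> cat_hom C A B \<and>
     (\<forall>X \<in> cat_ob C. \<forall>u \<in> cat_hom C X A. \<forall>v \<in> cat_hom C X A.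
        cat_comp C f u = cat_comp C f v \<longrightarrow> u = v)"

definition cat_epi :: "('o, 'm) precat \<Rightarrow> 'o \<Rightarrow> 'o \<Rightarrow> 'm \<Rightarrow> bool" where
  "cat_epi C A B f \<longleftrightarrow> f \<in> cat_hom C A B \<and>
     (\<forall>X \<in> cat_ob C. \<forall>u \<in> cat_hom C B X. \<forall>v \<in> cat_hom C B X.
        cat_comp C u f = cat_comp C v f \<longrightarrow> u = v)"

definition split_epi :: "('o, 'm) precat \<Rightarrow> 'o \<Rightarrow> 'o \<Rightarrow> 'm \<Rightarrow> bool" where
  "split_epi C A B f \<longleftrightarrow> f \<in> cat_hom C A B \<and>
     (\<exists>s \<in> cat_hom C B A. cat_comp C f s = cat_id C B)"

definition split_mono :: "('o, 'm) precat \<Rightarrow> 'o \<Rightarrow> 'o \<Rightarrow> 'm \<Rightarrow> bool" where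
  "split_mono C A B f \<longleftrightarrow> f \<in> cat_hom C A B \<and>
     (\<exists>r \<in> cat_hom C B A. cat_comp C r f = cat_id C A)"

definition idempotent_complete :: "('o, 'm) precat \<Rightarrow> bool" where
  "idempotent_complete C \<longleftrightarrow>
     (\<forall>X \<in> cat_ob C. \<forall>e \<in> cat_hom C X X. cat_comp C e e = e \<longrightarrow>
        (\<exists>Y \<in> cat_ob C. \<exists>f \<in> cat_hom C Y X. \<exists>g \<in> cat_hom C X Y.
           cat_comp C f g = e \<and> cat_comp C g f = cat_id C Y))"

definition weak_kernel :: "('o, 'm) precat \<Rightarrow> 'o \<Rightarrow> 'o \<Rightarrow> 'm \<Rightarrow> 'o \<Rightarrow> 'm \<Rightarrow> bool" where
  "weak_kernel C A B f K k \<longleftrightarrow> K \<in> cat_ob C \<and> k \<in> cat_hom C K A \<and>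
     cat_comp C f k = cat_zero C K B \<and>
     (\<forall>U \<in> cat_ob C. \<forall>u \<in> cat_hom C U A. cat_comp C f u = cat_zero C U B \<longrightarrow>
        (\<exists>v \<in> cat_hom C U K. u = cat_comp C k v))"

definition weak_cokernel :: "('o, 'm) precat \<Rightarrow> 'o \<Rightarrow> 'o \<Rightarrow> 'm \<Rightarrow> 'o \<Rightarrow> 'm \<Rightarrow> bool" where
  "weak_cokernel C A B f Q c \<longleftrightarrow> Q \<in> cat_ob C \<and> c \<in> cat_hom C B Q \<and>
     cat_comp C c f = cat_zero C A Q \<and>
     (\<forall>U \<in> cat_ob C. \<forall>u \<in> cat_hom C B U. cat_comp C u f = cat_zero C A U \<longrightarrow>
        (\<exists>v \<in> cat_hom C Q U. u = cat_comp C v c))"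

definition has_weak_kernels :: "('o, 'm) precat \<Rightarrow> bool" where
  "has_weak_kernels C \<longleftrightarrow> (\<forall>A \<in> cat_ob C. \<forall>B \<in> cat_ob C. \<forall>f \<in> cat_hom C A B.
      \<exists>K k. weak_kernel C A B f K k)"

definition has_weak_cokernels :: "('o, 'm) precat \<Rightarrow> bool" where
  "has_weak_cokernels C \<longleftrightarrow> (\<forall>A \<in> cat_ob C. \<forall>B \<in> cat_ob C. \<forall>f \<in> cat_hom C A B.
      \<exists>Q c. weak_cokernel C A B f Q c)"

text \<open>n-kernel of f : A -> A' (n >= 1): objects B 1..B n and maps b i : B i -> B (i+1)
  (with B (n+1) read as A), such that for every X the sequence
  0 -> C(X,B 1) -> ... -> C(X,B n) -> C(X,A) -> C(X,A') is exact.\<close>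
definition is_n_kernel ::
  "('o, 'm) precat \<Rightarrow> nat \<Rightarrow> 'o \<Rightarrow> 'o \<Rightarrow> 'm \<Rightarrow> (nat \<Rightarrow> 'o) \<Rightarrow> (nat \<Rightarrow> 'm) \<Rightarrow> bool" where
  "is_n_kernel C n A A' f B b \<longleftrightarrow>
   (if n = 0 then
      B 0 \<in> cat_ob C \<and> cat_mono C (B 0) A' (b 0) \<and>
      (\<exists>c. split_epi C A (B 0) c \<and> f = cat_comp C (b 0) c)
    else
      (let Bx = (\<lambda>i. if i = n + 1 then A else if i = n + 2 then A' else B i);
           bx = (\<lambda>i. if i = n + 1 then f else b i)
       in (\<forall>i \<in> {1..n}. B i \<in> cat_ob C \<and> b i \<in> cat_hom C (B i) (Bx (Suc i))) \<and>
          (\<forall>X \<in> cat_ob C. \<forall>u \<in> cat_hom C X (B 1).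
             cat_comp C (b 1) u = cat_zero C X (Bx 2) \<longrightarrow> u = cat_zero C X (B 1)) \<and>
          (\<forall>X \<in> cat_ob C. \<forall>i \<in> {2..n+1}. \<forall>u \<in> cat_hom C X (Bx i).
             cat_comp C (bx i) u = cat_zero C X (Bx (Suc i)) \<longleftrightarrow>
             (\<exists>v \<in> cat_hom C X (B (i - 1)). u = cat_comp C (b (i - 1)) v))))"

text \<open>n-cokernel of f : A -> A' (n >= 1): objects C' 1..C' n and maps c i : C' i -> C' (i+1)
  for i = 0..n-1 (with C' 0 read as A'), such that for every X the sequence
  0 -> C(C' n,X) -> ... -> C(C' 1,X) -> C(A',X) -> C(A,X) is exact.\<close>
definition is_n_cokernel ::
  "('o, 'm) precat \<Rightarrow> nat \<Rightarrow> 'o \<Rightarrow> 'o \<Rightarrow> 'm \<Rightarrow> (nat \<Rightarrow> 'o) \<Rightarrow> (nat \<Rightarrow> 'm) \<Rightarrow> bool" where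
  "is_n_cokernel C n A A' f Q c \<longleftrightarrow>
   (if n = 0 then
      Q 0 \<in> cat_ob C \<and> cat_epi C A (Q 0) (c 0) \<and>
      (\<exists>s. split_mono C (Q 0) A' s \<and> f = cat_comp C s (c 0))
    else
      (let Qx = (\<lambda>i. if i = 0 then A' else Q i);
           fx = (\<lambda>i. if i = 0 then f else c (i - 1));
           sx = (\<lambda>i. if i = 0 then A else Qx (i - 1))
       in (\<forall>i \<in> {1..n}. Q i \<in> cat_ob C) \<and>
          (\<forall>i < n. c i \<in> cat_hom C (Qx i) (Q (Suc i))) \<and>
          (\<forall>X \<in> cat_ob C. \<forall>u \<in> cat_hom C (Q n) X.
             cat_comp C u (c (n - 1)) = cat_zero C (Qx (n - 1)) X \<longrightarrow> u = cat_zero C (Q n) X) \<and>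
          (\<forall>X \<in> cat_ob C. \<forall>i < n. \<forall>u \<in> cat_hom C (Qx i) X.
             cat_comp C u (fx i) = cat_zero C (sx i) X \<longleftrightarrow>
             (\<exists>v \<in> cat_hom C (Q (Suc i)) X. u = cat_comp C v (c i)))))"

definition has_n_kernels :: "('o, 'm) precat \<Rightarrow> nat \<Rightarrow> bool" where
  "has_n_kernels C n \<longleftrightarrow> (\<forall>A \<in> cat_ob C. \<forall>A' \<in> cat_ob C. \<forall>f \<in> cat_hom C A A'.
      \<exists>B b. is_n_kernel C n A A' f B b)"

definition has_n_cokernels :: "('o, 'm) precat \<Rightarrow> nat \<Rightarrow> bool" where
  "has_n_cokernels C n \<longleftrightarrow> (\<forall>A \<in> cat_ob C. \<forall>A' \<in> cat_ob C. \<forall>f \<in> cat_hom C A A'.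
      \<exists>Q c. is_n_cokernel C n A A' f Q c)"

end

(*
  Let f : A -> A'. Extend f to a sequence A -> A' -> Y_2 -> Y_3 -> ... in which every map is a
  weak cokernel of the previous one, and take an n-kernel B_1 -> ... -> B_n -> Y_(n+1) of the map
  Y_(n+1) -> Y_(n+2). Comparing this left exact complex with the right exact weak-cokernel
  sequence, starting from the identity of Y_(n+1), produces an idempotent p of Y_(n+1) that fixes
  Y_n -> Y_(n+1) and is killed by Y_(n+1) -> Y_(n+2). Splitting p through an object E and
  replacing Y_(n+1) by E turns A' -> Y_2 -> ... -> Y_n -> E into an n-cokernel of f: its last map
  becomes an epimorphism. For n = 0 the idempotent is 1 - s e, where b e is a 0-kernel of a weak
  cokernel of f and s is a section of e. All hypotheses are self-dual, so the converse follows by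
  passing to the opposite category.
*)

theory Submission
  imports Defs
begin

locale preadditive_category =
  fixes C :: "('o, 'm) precat"
  assumes preadditive: "preadditive C"
begin

abbreviation ob where "ob \<equiv> cat_ob C"
abbreviation hom where "hom \<equiv> cat_hom C"
abbreviation comp (infixl "\<cdot>" 70) where "g \<cdot> f \<equiv> cat_comp C g f"
abbreviation add (infixl "\<uplus>" 65) where "f \<uplus> g \<equiv> cat_add C f g"
abbreviation zero where "zero \<equiv> cat_zero C"
abbreviation idm where "idm \<equiv> cat_id C"

definition neg where "neg A B f = inv\<^bsub>hom_group C A B\<^esub> f"

lemma hom_ob: "f \<in> hom A B \<Longrightarrow> A \<in> ob \<and> B \<in> ob"
proof -
  have "\<forall>A B. (A \<notin> ob \<or> B \<notin> ob) \<longrightarrow> hom A B = {}"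
    using preadditive unfolding preadditive_def by (elim conjE)
  then show "f \<in> hom A B \<Longrightarrow> A \<in> ob \<and> B \<in> ob" by blast
qed

lemma hom_unique: "f \<in> hom A B \<Longrightarrow> f \<in> hom A' B' \<Longrightarrow> A = A' \<and> B = B'"
proof -
  have "\<forall>A B A' B' f. f \<in> hom A B \<and> f \<in> hom A' B' \<longrightarrow> A = A' \<and> B = B'"
    using preadditive unfolding preadditive_def by (elim conjE)
  then show "f \<in> hom A B \<Longrightarrow> f \<in> hom A' B' \<Longrightarrow> A = A' \<and> B = B'" by blast
qed

lemma comp_hom [intro]: "f \<in> hom A B \<Longrightarrow> g \<in> hom B D \<Longrightarrow> g \<cdot> f \<in> hom A D"
proof -
  have "\<forall>A B D f g. f \<in> hom A B \<and> g \<in> hom B D \<longrightarrow> g \<cdot> f \<in> hom A D"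
    using preadditive unfolding preadditive_def by (elim conjE)
  then show "f \<in> hom A B \<Longrightarrow> g \<in> hom B D \<Longrightarrow> g \<cdot> f \<in> hom A D" by blast
qed

lemma comp_assoc:
  "f \<in> hom A B \<Longrightarrow> g \<in> hom B D \<Longrightarrow> h \<in> hom D E \<Longrightarrow> h \<cdot> (g \<cdot> f) = (h \<cdot> g) \<cdot> f"
proof -
  have "\<forall>A B D E f g h. f \<in> hom A B \<and> g \<in> hom B D \<and> h \<in> hom D E \<longrightarrow>
      h \<cdot> (g \<cdot> f) = (h \<cdot> g) \<cdot> f"
    using preadditive unfolding preadditive_def by (elim conjE)
  then show "f \<in> hom A B \<Longrightarrow> g \<in> hom B D \<Longrightarrow> h \<in> hom D E \<Longrightarrow> h \<cdot> (g \<cdot> f) = (h \<cdot> g) \<cdot> f"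
    by blast
qed

lemma id_hom [intro]: "A \<in> ob \<Longrightarrow> idm A \<in> hom A A"
proof -
  have "\<forall>A \<in> ob. idm A \<in> hom A A"
    using preadditive unfolding preadditive_def by (elim conjE)
  then show "A \<in> ob \<Longrightarrow> idm A \<in> hom A A" by blast
qed

lemma id_left_right: "f \<in> hom A B \<Longrightarrow> idm B \<cdot> f = f \<and> f \<cdot> idm A = f"
proof -
  have "\<forall>A B f. f \<in> hom A B \<longrightarrow> idm B \<cdot> f = f \<and> f \<cdot> idm A = f"
    using preadditive unfolding preadditive_def by (elim conjE)
  then show "f \<in> hom A B \<Longrightarrow> idm B \<cdot> f = f \<and> f \<cdot> idm A = f" by blast
qed

lemma id_left [simp]: "f \<in> hom A B \<Longrightarrow> idm B \<cdot> f = f"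
  using id_left_right by blast

lemma id_right [simp]: "f \<in> hom A B \<Longrightarrow> f \<cdot> idm A = f"
  using id_left_right by blast

lemma hom_comm_group: "A \<in> ob \<Longrightarrow> B \<in> ob \<Longrightarrow> comm_group (hom_group C A B)"
proof -
  have "\<forall>A \<in> ob. \<forall>B \<in> ob. comm_group (hom_group C A B)"
    using preadditive unfolding preadditive_def by (elim conjE)
  then show "A \<in> ob \<Longrightarrow> B \<in> ob \<Longrightarrow> comm_group (hom_group C A B)" by blast
qed

lemma comp_distrib_left:
  "f \<in> hom A B \<Longrightarrow> f' \<in> hom A B \<Longrightarrow> g \<in> hom B D \<Longrightarrow> g \<cdot> (f \<uplus> f') = g \<cdot> f \<uplus> g \<cdot> f'"
proof -
  have "\<forall>A B D f f' g. f \<in> hom A B \<and> f' \<in> hom A B \<and> g \<in> hom B D \<longrightarrow>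
      g \<cdot> (f \<uplus> f') = g \<cdot> f \<uplus> g \<cdot> f'"
    using preadditive unfolding preadditive_def by (elim conjE)
  then show "f \<in> hom A B \<Longrightarrow> f' \<in> hom A B \<Longrightarrow> g \<in> hom B D \<Longrightarrow>
      g \<cdot> (f \<uplus> f') = g \<cdot> f \<uplus> g \<cdot> f'" by blast
qed

lemma comp_distrib_right:
  "f \<in> hom A B \<Longrightarrow> g \<in> hom B D \<Longrightarrow> g' \<in> hom B D \<Longrightarrow> (g \<uplus> g') \<cdot> f = g \<cdot> f \<uplus> g' \<cdot> f"
proof -
  have "\<forall>A B D f g g'. f \<in> hom A B \<and> g \<in> hom B D \<and> g' \<in> hom B D \<longrightarrow>
      (g \<uplus> g') \<cdot> f = g \<cdot> f \<uplus> g' \<cdot> f"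
    using preadditive unfolding preadditive_def by (elim conjE)
  then show "f \<in> hom A B \<Longrightarrow> g \<in> hom B D \<Longrightarrow> g' \<in> hom B D \<Longrightarrow>
      (g \<uplus> g') \<cdot> f = g \<cdot> f \<uplus> g' \<cdot> f" by blast
qed

lemma hom_group_simps [simp]:
  "carrier (hom_group C A B) = hom A B" "monoid.mult (hom_group C A B) = cat_add C"
  "one (hom_group C A B) = zero A B"
  by (simp_all add: hom_group_def)

lemma zero_hom [intro]: "A \<in> ob \<Longrightarrow> B \<in> ob \<Longrightarrow> zero A B \<in> hom A B"
proof -
  assume "A \<in> ob" "B \<in> ob"
  then interpret G: comm_group "hom_group C A B" by (rule hom_comm_group)
  show ?thesis using G.one_closed by simp
qed

lemma add_hom [intro]:
  assumes "f \<in> hom A B" "g \<in> hom A B"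
  shows "f \<uplus> g \<in> hom A B"
proof -
  interpret G: comm_group "hom_group C A B" using hom_comm_group hom_ob[OF assms(1)] by blast
  show ?thesis using G.m_closed[of f g] assms by simp
qed

lemma neg_hom [intro]:
  assumes "f \<in> hom A B"
  shows "neg A B f \<in> hom A B"
proof -
  interpret G: comm_group "hom_group C A B" using hom_comm_group hom_ob[OF assms(1)] by blast
  show ?thesis using G.inv_closed[of f] assms by (simp add: neg_def)
qed

lemma add_zero_right [simp]:
  assumes "f \<in> hom A B"
  shows "f \<uplus> zero A B = f"
proof -
  interpret G: comm_group "hom_group C A B" using hom_comm_group hom_ob[OF assms(1)] by blast
  show ?thesis using G.r_one[of f] assms by simp
qed

lemma add_zero_left [simp]:
  assumes "f \<in> hom A B"
  shows "zero A B \<uplus> f = f"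
proof -
  interpret G: comm_group "hom_group C A B" using hom_comm_group hom_ob[OF assms(1)] by blast
  show ?thesis using G.l_one[of f] assms by simp
qed

lemma add_neg [simp]:
  assumes "f \<in> hom A B"
  shows "f \<uplus> neg A B f = zero A B"
proof -
  interpret G: comm_group "hom_group C A B" using hom_comm_group hom_ob[OF assms(1)] by blast
  show ?thesis using G.r_inv[of f] assms by (simp add: neg_def)
qed

lemma eq_add_of_diff_eq:
  assumes "a \<in> hom A B" "b \<in> hom A B" "a \<uplus> neg A B b = c"
  shows "a = c \<uplus> b"
proof -
  interpret G: comm_group "hom_group C A B" using hom_comm_group hom_ob[OF assms(1)] by blast
  have "c \<uplus> b = (a \<uplus> neg A B b) \<uplus> b" using assms(3) by simp
  also have "\<dots> = a \<uplus> (neg A B b \<uplus> b)"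
    using G.m_assoc[of a "neg A B b" b] neg_hom[OF assms(2)] assms by (simp add: neg_def)
  also have "\<dots> = a"
    using G.l_inv[of b] assms by (simp add: neg_def)
  finally show ?thesis by (rule sym)
qed

lemma eq_of_diff_eq_zero:
  "a \<in> hom A B \<Longrightarrow> b \<in> hom A B \<Longrightarrow> a \<uplus> neg A B b = zero A B \<Longrightarrow> a = b"
  using eq_add_of_diff_eq by (metis add_zero_left)

lemma zero_of_add_self:
  assumes "f \<in> hom A B" "f \<uplus> f = f"
  shows "f = zero A B"
proof -
  interpret G: comm_group "hom_group C A B" using hom_comm_group hom_ob[OF assms(1)] by blast
  show ?thesis using G.l_cancel_one[of f f] assms by simp
qed

lemma comp_zero_right [simp]:
  assumes "g \<in> hom B D" "A \<in> ob"
  shows "g \<cdot> zero A B = zero A D"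
proof -
  have z: "zero A B \<in> hom A B" using assms hom_ob[OF assms(1)] by blast
  have "g \<cdot> zero A B \<uplus> g \<cdot> zero A B = g \<cdot> zero A B"
    using comp_distrib_left[OF z z assms(1)] z by simp
  then show ?thesis using zero_of_add_self[OF comp_hom[OF z assms(1)]] by blast
qed

lemma comp_zero_left [simp]:
  assumes "f \<in> hom A B" "D \<in> ob"
  shows "zero B D \<cdot> f = zero A D"
proof -
  have z: "zero B D \<in> hom B D" using assms hom_ob[OF assms(1)] by blast
  have "zero B D \<cdot> f \<uplus> zero B D \<cdot> f = zero B D \<cdot> f"
    using comp_distrib_right[OF assms(1) z z] z by simp
  then show ?thesis using zero_of_add_self[OF comp_hom[OF assms(1) z]] by blast
qed

lemma neg_unique:
  assumes "a \<in> hom A B" "b \<in> hom A B" "a \<uplus> b = zero A B"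
  shows "b = neg A B a"
proof -
  interpret G: comm_group "hom_group C A B" using hom_comm_group hom_ob[OF assms(1)] by blast
  show ?thesis using G.inv_equality[of b a] G.m_comm[of a b] assms by (simp add: neg_def)
qed

lemma neg_comp:
  assumes "w \<in> hom A B" "g \<in> hom A' A"
  shows "neg A B w \<cdot> g = neg A' B (w \<cdot> g)"
proof -
  have "w \<cdot> g \<uplus> neg A B w \<cdot> g = zero A' B"
    using comp_distrib_right[OF assms(2,1) neg_hom[OF assms(1)]] assms hom_ob[OF assms(1)] hom_ob[OF assms(2)] by simp
  then show ?thesis using neg_unique assms by blast
qed

lemma neg_zero [simp]: "A \<in> ob \<Longrightarrow> B \<in> ob \<Longrightarrow> neg A B (zero A B) = zero A B"
  using neg_unique[of "zero A B" A B "zero A B"] zero_hom by simp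

lemma comp_neg:
  assumes "w \<in> hom A B" "g \<in> hom B D"
  shows "g \<cdot> neg A B w = neg A D (g \<cdot> w)"
proof -
  have "g \<cdot> w \<uplus> g \<cdot> neg A B w = zero A D"
    using comp_distrib_left[OF assms(1) neg_hom[OF assms(1)] assms(2)] assms hom_ob[OF assms(1)] hom_ob[OF assms(2)]
    by simp
  then show ?thesis using neg_unique assms by blast
qed

lemma diff_comp_eq_zero:
  assumes "u \<in> hom B X" "v \<in> hom B X" "g \<in> hom A B" "u \<cdot> g = v \<cdot> g"
  shows "(u \<uplus> neg B X v) \<cdot> g = zero A X"
  using comp_distrib_right[OF assms(3,1) neg_hom[OF assms(2)]] neg_comp[OF assms(2,3)] assms
    add_neg[OF comp_hom[OF assms(3,2)]] by simp

lemma weak_kernel_factor: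
  "weak_kernel C A B f K k \<Longrightarrow> U \<in> ob \<Longrightarrow> u \<in> hom U A \<Longrightarrow> f \<cdot> u = zero U B \<Longrightarrow>
    \<exists>v \<in> hom U K. u = k \<cdot> v"
  unfolding weak_kernel_def by blast

lemma weak_cokernel_factor:
  "weak_cokernel C A B f Q c \<Longrightarrow> U \<in> ob \<Longrightarrow> u \<in> hom B U \<Longrightarrow> u \<cdot> f = zero A U \<Longrightarrow>
    \<exists>v \<in> hom Q U. u = v \<cdot> c"
  unfolding weak_cokernel_def by blast

lemma cat_epi_if_zero_cancel:
  assumes g: "g \<in> hom A B"
    and cancel: "\<And>X u. X \<in> ob \<Longrightarrow> u \<in> hom B X \<Longrightarrow> u \<cdot> g = zero A X \<Longrightarrow> u = zero B X"
  shows "cat_epi C A B g"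
  unfolding cat_epi_def
proof (intro conjI ballI impI g)
  fix X u v assume "X \<in> ob" "u \<in> hom B X" "v \<in> hom B X" "u \<cdot> g = v \<cdot> g"
  then show "u = v"
    using cancel[of X "u \<uplus> neg B X v"] diff_comp_eq_zero[OF _ _ g] eq_of_diff_eq_zero by blast
qed

lemma weak_cokernel_factor_difference:
  assumes cok: "weak_cokernel C X Y g W h" and g: "g \<in> hom X Y"
    and u: "u \<in> hom Y V" and w: "w \<in> hom Y V" and eq: "u \<cdot> g = w \<cdot> g"
  obtains z where "z \<in> hom W V" "u = z \<cdot> h \<uplus> w"
proof -
  have diff: "u \<uplus> neg Y V w \<in> hom Y V" using u w by blast
  have "(u \<uplus> neg Y V w) \<cdot> g = zero X V" using diff_comp_eq_zero[OF u w g eq] .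
  then obtain z where "z \<in> hom W V" "u \<uplus> neg Y V w = z \<cdot> h"
    using weak_cokernel_factor[OF cok _ diff] hom_ob[OF u] by blast
  then show ?thesis using that eq_add_of_diff_eq[OF u w] by blast
qed

lemma idempotent_if_fixes_weak_cokernel_source:
  assumes cok: "weak_cokernel C X Y g W h" and g: "g \<in> hom X Y" and p: "p \<in> hom Y Y"
    and fix_g: "p \<cdot> g = g" and kill_h: "h \<cdot> p = zero Y W"
  shows "p \<cdot> p = p"
proof -
  have Y: "Y \<in> ob" and idY: "idm Y \<in> hom Y Y" using p hom_ob[OF p] by blast+
  obtain v where v: "v \<in> hom W Y" and id_eq: "idm Y = v \<cdot> h \<uplus> p"
    using weak_cokernel_factor_difference[OF cok g idY p] fix_g g by auto
  have h: "h \<in> hom Y W" using cok unfolding weak_cokernel_def by blast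
  have "p = (v \<cdot> h \<uplus> p) \<cdot> p" using id_eq p by (metis id_left)
  also have "\<dots> = v \<cdot> (h \<cdot> p) \<uplus> p \<cdot> p"
    using comp_distrib_right[OF p comp_hom[OF h v] p] comp_assoc[OF p h v] by simp
  also have "\<dots> = p \<cdot> p" using kill_h v Y add_zero_left[OF comp_hom[OF p p]] by simp
  finally show ?thesis by (rule sym)
qed

lemma weak_cokernel_retract:
  assumes cok: "weak_cokernel C X Y f W g" and f: "f \<in> hom X Y"
    and i: "i \<in> hom E W" and r: "r \<in> hom W E" and fix_g: "(i \<cdot> r) \<cdot> g = g"
  shows "weak_cokernel C X Y f E (r \<cdot> g)"
  unfolding weak_cokernel_def
proof (intro conjI ballI impI)
  have g: "g \<in> hom Y W" and gf: "g \<cdot> f = zero X W" using cok unfolding weak_cokernel_def by blast+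
  show "E \<in> ob" "r \<cdot> g \<in> hom Y E" using r g hom_ob[OF r] by blast+
  show "(r \<cdot> g) \<cdot> f = zero X E" using comp_assoc[OF f g r] gf r hom_ob[OF f] by simp
  fix U u assume "U \<in> ob" "u \<in> hom Y U" "u \<cdot> f = zero X U"
  then obtain w where w: "w \<in> hom W U" "u = w \<cdot> g" using weak_cokernel_factor[OF cok] by blast
  have "u = w \<cdot> (i \<cdot> (r \<cdot> g))" using w fix_g comp_assoc[OF g r i] by simp
  also have "\<dots> = (w \<cdot> i) \<cdot> (r \<cdot> g)" using comp_assoc[OF comp_hom[OF g r] i w(1)] .
  finally show "\<exists>v \<in> hom E U. u = v \<cdot> (r \<cdot> g)" using w i by blast
qed

lemma cat_epi_retract_comp:
  assumes cok: "weak_cokernel C Y W g V h" and g: "g \<in> hom Y W"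
    and i: "i \<in> hom E W" and r: "r \<in> hom W E" and ri: "r \<cdot> i = idm E" and hi: "h \<cdot> i = zero E V"
  shows "cat_epi C Y E (r \<cdot> g)"
proof (rule cat_epi_if_zero_cancel)
  show "r \<cdot> g \<in> hom Y E" using g r by blast
  fix X u assume X: "X \<in> ob" and u: "u \<in> hom E X" and zero_u: "u \<cdot> (r \<cdot> g) = zero Y X"
  then have "(u \<cdot> r) \<cdot> g = zero Y X" using comp_assoc[OF g r u] by simp
  then obtain t where t: "t \<in> hom V X" "u \<cdot> r = t \<cdot> h"
    using weak_cokernel_factor[OF cok X comp_hom[OF r u]] by blast
  have h: "h \<in> hom W V" using cok unfolding weak_cokernel_def by blast
  have "u = (u \<cdot> r) \<cdot> i" using comp_assoc[OF i r u] ri u by simp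
  also have "\<dots> = t \<cdot> (h \<cdot> i)" using t comp_assoc[OF i h t(1)] by simp
  also have "\<dots> = zero E X" using hi t(1) hom_ob[OF i] by simp
  finally show "u = zero E X" .
qed

lemma weak_cokernel_sequence:
  assumes wc: "has_weak_cokernels C" and f: "f \<in> hom A A'"
  obtains Y g where "Y 0 = A" "Y 1 = A'" "g 0 = f"
    "\<And>k. g k \<in> hom (Y k) (Y (Suc k))"
    "\<And>k. weak_cokernel C (Y k) (Y (Suc k)) (g k) (Y (Suc (Suc k))) (g (Suc k))"
proof -
  define cok where "cok S T h = (SOME p. weak_cokernel C S T h (fst p) (snd p))" for S T h
  have cok: "weak_cokernel C S T h (fst (cok S T h)) (snd (cok S T h))" if h: "h \<in> hom S T" for S T h
  proof -
    obtain Q c where "weak_cokernel C S T h Q c"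
      using wc hom_ob[OF h] h unfolding has_weak_cokernels_def by blast
    then have "\<exists>p. weak_cokernel C S T h (fst p) (snd p)" by (intro exI[of _ "(Q, c)"]) simp
    then show ?thesis unfolding cok_def by (rule someI_ex)
  qed
  define seq where "seq k = ((\<lambda>t. (fst (snd t), cok (fst t) (fst (snd t)) (snd (snd t)))) ^^ k) (A, A', f)"
    for k
  define Y where "Y k = fst (seq k)" for k
  define g where "g k = snd (snd (seq k))" for k
  have seq_Suc: "seq (Suc k) =
      (fst (snd (seq k)), cok (fst (seq k)) (fst (snd (seq k))) (snd (snd (seq k))))" for k
    by (simp add: seq_def)
  have Y_Suc_Suc: "Y (Suc (Suc k)) = fst (cok (Y k) (Y (Suc k)) (g k))"
    and g_Suc: "g (Suc k) = snd (cok (Y k) (Y (Suc k)) (g k))" for k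
    unfolding Y_def g_def by (simp_all add: seq_Suc)
  have g: "g k \<in> hom (Y k) (Y (Suc k))" for k
  proof (induction k)
    case 0
    then show ?case using f by (simp add: Y_def g_def seq_def)
  next
    case (Suc k)
    then show ?case using cok[OF Suc.IH] unfolding weak_cokernel_def Y_Suc_Suc g_Suc by blast
  qed
  show ?thesis
  proof
    show "Y 0 = A" "Y 1 = A'" "g 0 = f" by (simp_all add: Y_def g_def seq_def)
    show "g k \<in> hom (Y k) (Y (Suc k))" for k by (rule g)
    show "weak_cokernel C (Y k) (Y (Suc k)) (g k) (Y (Suc (Suc k))) (g (Suc k))" for k
      using cok[OF g] Y_Suc_Suc g_Suc by simp
  qed
qed

lemma factor_through_weak_cokernel_mod_kernel:
  assumes cok: "weak_cokernel C X Y g W h" and g: "g \<in> hom X Y" and b: "b \<in> hom T U"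
    and y: "y \<in> hom Y T" and w: "w \<in> hom Y T" and eq: "y \<cdot> g = w \<cdot> g" and bw: "b \<cdot> w = zero Y U"
  shows "\<exists>z \<in> hom W T. b \<cdot> y = b \<cdot> (z \<cdot> h)"
proof -
  obtain z where z: "z \<in> hom W T" "y = z \<cdot> h \<uplus> w"
    using weak_cokernel_factor_difference[OF cok g y w eq] .
  have h: "h \<in> hom Y W" using cok unfolding weak_cokernel_def by blast
  have zh: "z \<cdot> h \<in> hom Y T" using z h by blast
  have "b \<cdot> y = b \<cdot> (z \<cdot> h) \<uplus> b \<cdot> w"
    using z(2) comp_distrib_left[OF zh w b] by simp
  also have "\<dots> = b \<cdot> (z \<cdot> h)"
    using bw add_zero_right[OF comp_hom[OF zh b]] by simp
  finally show ?thesis using z(1) by blast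
qed

lemma comparison_square_factorization:
  assumes g: "\<And>k. g k \<in> hom (Y k) (Y (Suc k))"
    and cok: "\<And>k. weak_cokernel C (Y k) (Y (Suc k)) (g k) (Y (Suc (Suc k))) (g (Suc k))"
    and b: "\<And>i. 1 \<le> i \<Longrightarrow> i \<le> m \<Longrightarrow> b i \<in> hom (T i) (T (Suc i))"
    and ker: "\<And>i. 1 \<le> i \<Longrightarrow> i < m \<Longrightarrow>
      weak_kernel C (T (Suc i)) (T (Suc (Suc i))) (b (Suc i)) (T i) (b i)"
    and mono: "\<And>X u. X \<in> ob \<Longrightarrow> u \<in> hom X (T 1) \<Longrightarrow> b 1 \<cdot> u = zero X (T 2) \<Longrightarrow>
      u = zero X (T 1)"
  shows "1 \<le> j \<Longrightarrow> j \<le> m \<Longrightarrow> y \<in> hom (Y j) (T j) \<Longrightarrow> y' \<in> hom (Y (Suc j)) (T (Suc j)) \<Longrightarrow>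
    b j \<cdot> y = y' \<cdot> g j \<Longrightarrow> \<exists>z \<in> hom (Y (Suc j)) (T j). b j \<cdot> y = b j \<cdot> (z \<cdot> g j)"
proof (induction j arbitrary: y y')
  case 0
  then show ?case by simp
next
  case (Suc j)
  note y = \<open>y \<in> hom (Y (Suc j)) (T (Suc j))\<close>
    and y' = \<open>y' \<in> hom (Y (Suc (Suc j))) (T (Suc (Suc j)))\<close>
  have Y: "Y k \<in> ob" for k using hom_ob[OF g] by blast
  have T: "T (Suc j) \<in> ob" "T (Suc (Suc j)) \<in> ob" using hom_ob[OF y] hom_ob[OF y'] by blast+
  have bSj: "b (Suc j) \<in> hom (T (Suc j)) (T (Suc (Suc j)))" using b Suc.prems by simp
  have yg: "y \<cdot> g j \<in> hom (Y j) (T (Suc j))" using y g by blast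
  have gg: "g (Suc j) \<cdot> g j = zero (Y j) (Y (Suc (Suc j)))"
    using cok unfolding weak_cokernel_def by blast
  have "b (Suc j) \<cdot> (y \<cdot> g j) = y' \<cdot> (g (Suc j) \<cdot> g j)"
    using comp_assoc[OF g y bSj] comp_assoc[OF g g y'] \<open>b (Suc j) \<cdot> y = y' \<cdot> g (Suc j)\<close> by simp
  then have b_yg: "b (Suc j) \<cdot> (y \<cdot> g j) = zero (Y j) (T (Suc (Suc j)))"
    using gg comp_zero_right[OF y' Y] by simp
  have "\<exists>w \<in> hom (Y (Suc j)) (T (Suc j)).
      y \<cdot> g j = w \<cdot> g j \<and> b (Suc j) \<cdot> w = zero (Y (Suc j)) (T (Suc (Suc j)))"
  proof (cases "j = 0")
    case True
    have "y \<cdot> g j = zero (Y j) (T (Suc j))"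
      using mono[of "Y 0" "y \<cdot> g 0"] Y yg b_yg True by (simp add: numeral_2_eq_2)
    then show ?thesis
      using comp_zero_left[OF g T(1)] comp_zero_right[OF bSj Y] zero_hom[OF Y T(1)]
      by (intro bexI[of _ "zero (Y (Suc j)) (T (Suc j))"] conjI) simp_all
  next
    case False
    then have j: "1 \<le> j" "j \<le> m" "j < m" using \<open>Suc j \<le> m\<close> by simp_all
    obtain v where v: "v \<in> hom (Y j) (T j)" "y \<cdot> g j = b j \<cdot> v"
      using weak_kernel_factor[OF ker[OF j(1,3)] Y yg b_yg] by blast
    obtain z where z: "z \<in> hom (Y (Suc j)) (T j)" "b j \<cdot> v = b j \<cdot> (z \<cdot> g j)"
      using Suc.IH[OF j(1,2) v(1) y v(2)[symmetric]] by blast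
    have bj: "b j \<in> hom (T j) (T (Suc j))" using b j by simp
    have "b (Suc j) \<cdot> b j = zero (T j) (T (Suc (Suc j)))"
      using ker[OF j(1,3)] unfolding weak_kernel_def by blast
    then have "b (Suc j) \<cdot> (b j \<cdot> z) = zero (Y (Suc j)) (T (Suc (Suc j)))"
      using comp_assoc[OF z(1) bj bSj] comp_zero_left[OF z(1) T(2)] by simp
    moreover have "y \<cdot> g j = (b j \<cdot> z) \<cdot> g j" using v z comp_assoc[OF g z(1) bj] by simp
    ultimately show ?thesis using z(1) bj by blast
  qed
  then show ?case
    using factor_through_weak_cokernel_mod_kernel[OF cok g bSj y] by blast
qed

end

definition ker_ob :: "nat \<Rightarrow> 'o \<Rightarrow> 'o \<Rightarrow> (nat \<Rightarrow> 'o) \<Rightarrow> nat \<Rightarrow> 'o" where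
  "ker_ob n A A' B i = (if i = n + 1 then A else if i = n + 2 then A' else B i)"

definition ker_map :: "nat \<Rightarrow> 'm \<Rightarrow> (nat \<Rightarrow> 'm) \<Rightarrow> nat \<Rightarrow> 'm" where
  "ker_map n f b i = (if i = n + 1 then f else b i)"

definition coker_ob :: "'o \<Rightarrow> (nat \<Rightarrow> 'o) \<Rightarrow> nat \<Rightarrow> 'o" where
  "coker_ob A' Q i = (if i = 0 then A' else Q i)"

definition coker_map :: "'m \<Rightarrow> (nat \<Rightarrow> 'm) \<Rightarrow> nat \<Rightarrow> 'm" where
  "coker_map f c i = (if i = 0 then f else c (i - 1))"

definition coker_src :: "'o \<Rightarrow> 'o \<Rightarrow> (nat \<Rightarrow> 'o) \<Rightarrow> nat \<Rightarrow> 'o" where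
  "coker_src A A' Q i = (if i = 0 then A else coker_ob A' Q (i - 1))"

lemma is_n_kernel_pos:
  "n \<noteq> 0 \<Longrightarrow> is_n_kernel C n A A' f B b \<longleftrightarrow>
    (\<forall>i \<in> {1..n}. B i \<in> cat_ob C \<and> b i \<in> cat_hom C (B i) (ker_ob n A A' B (Suc i))) \<and>
    (\<forall>X \<in> cat_ob C. \<forall>u \<in> cat_hom C X (B 1).
       cat_comp C (b 1) u = cat_zero C X (ker_ob n A A' B 2) \<longrightarrow> u = cat_zero C X (B 1)) \<and>
    (\<forall>X \<in> cat_ob C. \<forall>i \<in> {2..n+1}. \<forall>u \<in> cat_hom C X (ker_ob n A A' B i).
       cat_comp C (ker_map n f b i) u = cat_zero C X (ker_ob n A A' B (Suc i)) \<longleftrightarrow>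
       (\<exists>v \<in> cat_hom C X (B (i - 1)). u = cat_comp C (b (i - 1)) v))"
  unfolding is_n_kernel_def Let_def ker_ob_def ker_map_def by simp

lemma is_n_cokernel_pos:
  "n \<noteq> 0 \<Longrightarrow> is_n_cokernel C n A A' f Q c \<longleftrightarrow>
    (\<forall>i \<in> {1..n}. Q i \<in> cat_ob C) \<and>
    (\<forall>i < n. c i \<in> cat_hom C (coker_ob A' Q i) (Q (Suc i))) \<and>
    (\<forall>X \<in> cat_ob C. \<forall>u \<in> cat_hom C (Q n) X.
       cat_comp C u (c (n - 1)) = cat_zero C (coker_ob A' Q (n - 1)) X \<longrightarrow> u = cat_zero C (Q n) X) \<and>
    (\<forall>X \<in> cat_ob C. \<forall>i < n. \<forall>u \<in> cat_hom C (coker_ob A' Q i) X.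
       cat_comp C u (coker_map f c i) = cat_zero C (coker_src A A' Q i) X \<longleftrightarrow>
       (\<exists>v \<in> cat_hom C (Q (Suc i)) X. u = cat_comp C v (c i)))"
  unfolding is_n_cokernel_def Let_def coker_ob_def coker_map_def coker_src_def by simp

context preadditive_category
begin

lemma n_kernel_weak_kernel:
  assumes K: "is_n_kernel C n A A' f B b" and n: "n \<noteq> 0" and i: "1 \<le> i" "i \<le> n"
  shows "weak_kernel C (ker_ob n A A' B (Suc i)) (ker_ob n A A' B (Suc (Suc i)))
    (ker_map n f b (Suc i)) (ker_ob n A A' B i) (ker_map n f b i)"
proof -
  have Bi: "ker_ob n A A' B i = B i" "ker_map n f b i = b i"
    using i by (simp_all add: ker_ob_def ker_map_def)
  have Bb: "B i \<in> ob" "b i \<in> hom (B i) (ker_ob n A A' B (Suc i))"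
    using K i unfolding is_n_kernel_pos[OF n] by auto
  have "\<forall>X \<in> ob. \<forall>i \<in> {2..n+1}. \<forall>u \<in> hom X (ker_ob n A A' B i).
      ker_map n f b i \<cdot> u = zero X (ker_ob n A A' B (Suc i)) \<longleftrightarrow> (\<exists>v \<in> hom X (B (i - 1)). u = b (i - 1) \<cdot> v)"
    using K unfolding is_n_kernel_pos[OF n] by blast
  then have exact: "ker_map n f b (Suc i) \<cdot> u = zero X (ker_ob n A A' B (Suc (Suc i))) \<longleftrightarrow>
      (\<exists>v \<in> hom X (B i). u = b i \<cdot> v)" if "X \<in> ob" "u \<in> hom X (ker_ob n A A' B (Suc i))" for X u
    using that i by auto
  show ?thesis
    unfolding weak_kernel_def Bi
  proof (intro conjI ballI impI Bb)
    show "ker_map n f b (Suc i) \<cdot> b i = zero (B i) (ker_ob n A A' B (Suc (Suc i)))"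
      using exact[OF Bb] Bb id_right[OF Bb(2)] id_hom[OF Bb(1)] by metis
    fix U u assume "U \<in> ob" "u \<in> hom U (ker_ob n A A' B (Suc i))"
      "ker_map n f b (Suc i) \<cdot> u = zero U (ker_ob n A A' B (Suc (Suc i)))"
    then show "\<exists>v \<in> hom U (B i). u = b i \<cdot> v" using exact by blast
  qed
qed

lemma n_kernel_map_hom:
  assumes K: "is_n_kernel C n A A' f B b" and n: "n \<noteq> 0" and f: "f \<in> hom A A'"
    and i: "1 \<le> i" "i \<le> Suc n"
  shows "ker_map n f b i \<in> hom (ker_ob n A A' B i) (ker_ob n A A' B (Suc i))"
proof (cases "i = Suc n")
  case True
  then show ?thesis using f by (simp add: ker_ob_def ker_map_def)
next
  case False
  then show ?thesis using n_kernel_weak_kernel[OF K n, of i] i unfolding weak_kernel_def by simp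
qed

lemma n_kernel_zero_cancel:
  assumes K: "is_n_kernel C n A A' f B b" and n: "n \<noteq> 0"
    and "X \<in> ob" "u \<in> hom X (ker_ob n A A' B 1)"
    "ker_map n f b 1 \<cdot> u = zero X (ker_ob n A A' B 2)"
  shows "u = zero X (ker_ob n A A' B 1)"
  using assms unfolding is_n_kernel_pos[OF n] by (simp add: ker_ob_def ker_map_def)

lemma is_n_cokernelI:
  assumes n: "n \<noteq> 0" and f: "f \<in> hom A A'"
    and cok: "\<And>k. k < n \<Longrightarrow> weak_cokernel C (coker_src A A' Q k) (coker_ob A' Q k)
      (coker_map f c k) (Q (Suc k)) (c k)"
    and epi: "cat_epi C (coker_ob A' Q (n - 1)) (Q n) (c (n - 1))"
  shows "is_n_cokernel C n A A' f Q c"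
proof -
  have c: "c k \<in> hom (coker_ob A' Q k) (Q (Suc k))" if "k < n" for k
    using cok[OF that] unfolding weak_cokernel_def by blast
  have fc: "coker_map f c k \<in> hom (coker_src A A' Q k) (coker_ob A' Q k)" if "k < n" for k
    using f c[of "k - 1"] that by (cases k) (simp_all add: coker_map_def coker_src_def coker_ob_def)
  show ?thesis
    unfolding is_n_cokernel_pos[OF n]
  proof (intro conjI ballI allI impI)
    fix k assume "k \<in> {1..n}"
    then show "Q k \<in> ob" using cok[of "k - 1"] unfolding weak_cokernel_def by auto
  next
    fix k assume "k < n"
    then show "c k \<in> hom (coker_ob A' Q k) (Q (Suc k))" by (rule c)
  next
    fix X u assume X: "X \<in> ob" and u: "u \<in> hom (Q n) X"
      and zero_u: "u \<cdot> c (n - 1) = zero (coker_ob A' Q (n - 1)) X"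
    have cn: "c (n - 1) \<in> hom (coker_ob A' Q (n - 1)) (Q n)" using c[of "n - 1"] n by simp
    have "u \<cdot> c (n - 1) = zero (Q n) X \<cdot> c (n - 1)" using zero_u comp_zero_left[OF cn X] by simp
    then show "u = zero (Q n) X"
      using epi X u zero_hom hom_ob[OF u] unfolding cat_epi_def by blast
  next
    fix X k u assume X: "X \<in> ob" and k: "k < n" and u: "u \<in> hom (coker_ob A' Q k) X"
    show "u \<cdot> coker_map f c k = zero (coker_src A A' Q k) X \<longleftrightarrow> (\<exists>v \<in> hom (Q (Suc k)) X. u = v \<cdot> c k)"
    proof
      assume "u \<cdot> coker_map f c k = zero (coker_src A A' Q k) X"
      then show "\<exists>v \<in> hom (Q (Suc k)) X. u = v \<cdot> c k" by (rule weak_cokernel_factor[OF cok[OF k] X u])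
    next
      assume "\<exists>v \<in> hom (Q (Suc k)) X. u = v \<cdot> c k"
      then obtain v where v: "v \<in> hom (Q (Suc k)) X" "u = v \<cdot> c k" by blast
      have "c k \<cdot> coker_map f c k = zero (coker_src A A' Q k) (Q (Suc k))"
        using cok[OF k] unfolding weak_cokernel_def by blast
      then show "u \<cdot> coker_map f c k = zero (coker_src A A' Q k) X"
        using v comp_assoc[OF fc[OF k] c[OF k] v(1)] comp_zero_right[OF v(1)] hom_ob[OF fc[OF k]] by simp
    qed
  qed
qed

lemma idempotent_from_n_kernel:
  assumes g: "\<And>k. g k \<in> hom (Y k) (Y (Suc k))"
    and cok: "\<And>k. weak_cokernel C (Y k) (Y (Suc k)) (g k) (Y (Suc (Suc k))) (g (Suc k))"
    and n: "n \<noteq> 0" and K: "is_n_kernel C n (Y (Suc n)) (Y (Suc (Suc n))) (g (Suc n)) B b"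
  obtains p where "p \<in> hom (Y (Suc n)) (Y (Suc n))" "p \<cdot> p = p" "p \<cdot> g n = g n"
    "g (Suc n) \<cdot> p = zero (Y (Suc n)) (Y (Suc (Suc n)))"
proof -
  define T where "T = ker_ob n (Y (Suc n)) (Y (Suc (Suc n))) B"
  define b' where "b' = ker_map n (g (Suc n)) b"
  have ker: "weak_kernel C (T (Suc i)) (T (Suc (Suc i))) (b' (Suc i)) (T i) (b' i)"
    if "1 \<le> i" "i < Suc n" for i
    using n_kernel_weak_kernel[OF K n] that unfolding T_def b'_def by simp
  have T_end: "T (Suc n) = Y (Suc n)" "T (Suc (Suc n)) = Y (Suc (Suc n))" "b' (Suc n) = g (Suc n)"
    by (simp_all add: T_def b'_def ker_ob_def ker_map_def)
  have b': "b' i \<in> hom (T i) (T (Suc i))" if "1 \<le> i" "i \<le> Suc n" for i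
    using n_kernel_map_hom[OF K n g that] unfolding T_def b'_def .
  have mono: "u = zero X (T 1)" if "X \<in> ob" "u \<in> hom X (T 1)" "b' 1 \<cdot> u = zero X (T 2)" for X u
    using n_kernel_zero_cancel[OF K n] that unfolding T_def b'_def by blast
  have ker_n: "weak_kernel C (Y (Suc n)) (Y (Suc (Suc n))) (g (Suc n)) (T n) (b' n)"
    using ker[of n] n T_end by simp
  have Y: "Y k \<in> ob" for k using hom_ob[OF g] by blast
  have "g (Suc n) \<cdot> g n = zero (Y n) (Y (Suc (Suc n)))"
    using cok unfolding weak_cokernel_def by blast
  then obtain y where y: "y \<in> hom (Y n) (T n)" "g n = b' n \<cdot> y"
    using weak_kernel_factor[OF ker_n Y g] by blast
  have bn: "b' n \<in> hom (T n) (Y (Suc n))" using b'[of n] n T_end by simp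
  have "b' n \<cdot> y = idm (Y (Suc n)) \<cdot> g n" using y(2)[symmetric] id_left[OF g] by simp
  then obtain z where z: "z \<in> hom (Y (Suc n)) (T n)" "b' n \<cdot> y = b' n \<cdot> (z \<cdot> g n)"
    using comparison_square_factorization[where g = g and Y = Y and b = b' and T = T and m = "Suc n",
        OF g cok b' ker mono, of n y "idm (Y (Suc n))"] n y(1)
      id_hom[OF Y] T_end by auto
  define p where "p = b' n \<cdot> z"
  have p: "p \<in> hom (Y (Suc n)) (Y (Suc n))" unfolding p_def using z bn by blast
  have fix_g: "p \<cdot> g n = g n" unfolding p_def using y z comp_assoc[OF g z(1) bn] by simp
  have "g (Suc n) \<cdot> b' n = zero (T n) (Y (Suc (Suc n)))"
    using ker_n unfolding weak_kernel_def by blast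
  then have kill: "g (Suc n) \<cdot> p = zero (Y (Suc n)) (Y (Suc (Suc n)))"
    unfolding p_def using comp_assoc[OF z(1) bn g] comp_zero_left[OF z(1) Y] by simp
  show ?thesis
    using that[OF p _ fix_g kill] idempotent_if_fixes_weak_cokernel_source[OF cok g p fix_g kill] by blast
qed

lemma n_cokernel_from_split_idempotent:
  assumes g: "\<And>k. g k \<in> hom (Y k) (Y (Suc k))"
    and cok: "\<And>k. weak_cokernel C (Y k) (Y (Suc k)) (g k) (Y (Suc (Suc k))) (g (Suc k))"
    and n: "n \<noteq> 0" and start: "Y 0 = A" "Y 1 = A'" "g 0 = f"
    and i: "i \<in> hom E (Y (Suc n))" and r: "r \<in> hom (Y (Suc n)) E" and ri: "r \<cdot> i = idm E"
    and fix_g: "(i \<cdot> r) \<cdot> g n = g n"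
    and kill: "g (Suc n) \<cdot> (i \<cdot> r) = zero (Y (Suc n)) (Y (Suc (Suc n)))"
  shows "is_n_cokernel C n A A' f (\<lambda>k. if k = n then E else Y (Suc k))
    (\<lambda>k. if k = n - 1 then r \<cdot> g n else g (Suc k))"
    (is "is_n_cokernel C n A A' f ?Q ?c")
proof (rule is_n_cokernelI[OF n])
  show "f \<in> hom A A'" using g[of 0] start by (simp add: One_nat_def)
  have ob: "coker_ob A' ?Q k = Y (Suc k)" if "k < n" for k
    using that start by (simp add: coker_ob_def)
  have src: "coker_src A A' ?Q k = Y k" if "k < n" for k
    using that start ob[of "k - 1"] by (cases k) (simp_all add: coker_src_def)
  have map: "coker_map f ?c k = g k" if "k < n" for k
    using that start by (cases k) (auto simp: coker_map_def)
  show "weak_cokernel C (coker_src A A' ?Q k) (coker_ob A' ?Q k) (coker_map f ?c k) (?Q (Suc k)) (?c k)"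
    if k: "k < n" for k
  proof (cases "k = n - 1")
    case True
    then have k_n: "Suc k = n" using k by simp
    have "i \<in> hom E (Y (Suc (Suc k)))" "r \<in> hom (Y (Suc (Suc k))) E"
      "(i \<cdot> r) \<cdot> g (Suc k) = g (Suc k)"
      using i r fix_g k_n by simp_all
    from weak_cokernel_retract[OF cok[of k] g[of k] this]
    show ?thesis using ob[OF k] src[OF k] map[OF k] True k_n by simp
  next
    case False
    then have "Suc k \<noteq> n" using k by simp
    then show ?thesis using cok[of k] ob[OF k] src[OF k] map[OF k] False by simp
  qed
  have "g (Suc n) \<cdot> i = g (Suc n) \<cdot> ((i \<cdot> r) \<cdot> i)"
    using comp_assoc[OF i r i, symmetric] ri i by simp
  also have "\<dots> = zero E (Y (Suc (Suc n)))"
    using comp_assoc[OF i comp_hom[OF r i] g] kill comp_zero_left[OF i] hom_ob[OF g] by simp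
  finally have "g (Suc n) \<cdot> i = zero E (Y (Suc (Suc n)))" .
  then show "cat_epi C (coker_ob A' ?Q (n - 1)) (?Q n) (?c (n - 1))"
    using cat_epi_retract_comp[OF cok[of n] g i r ri] ob[of "n - 1"] n by simp
qed

lemma split_epi_complement:
  assumes e: "e \<in> hom A B" and s: "s \<in> hom B A" and es: "e \<cdot> s = idm B"
  obtains q where "q \<in> hom A A" "e \<cdot> q = zero A B"
    "\<And>X h. h \<in> hom X A \<Longrightarrow> e \<cdot> h = zero X B \<Longrightarrow> q \<cdot> h = h"
proof
  have A: "A \<in> ob" and B: "B \<in> ob" and se: "s \<cdot> e \<in> hom A A" using e s hom_ob[OF e] by blast+
  have idA: "idm A \<in> hom A A" using A by blast
  show "idm A \<uplus> neg A A (s \<cdot> e) \<in> hom A A" using idA se by blast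
  have "e \<cdot> (s \<cdot> e) = e" using comp_assoc[OF e s e] es e by simp
  then show "e \<cdot> (idm A \<uplus> neg A A (s \<cdot> e)) = zero A B"
    using comp_distrib_left[OF idA neg_hom[OF se] e] comp_neg[OF se e] e by simp
  fix X h assume h: "h \<in> hom X A" and eh: "e \<cdot> h = zero X B"
  have X: "X \<in> ob" using hom_ob[OF h] by blast
  have "(s \<cdot> e) \<cdot> h = zero X A" using comp_assoc[OF h e s] eh comp_zero_right[OF s X] by simp
  then show "(idm A \<uplus> neg A A (s \<cdot> e)) \<cdot> h = h"
    using comp_distrib_right[OF h idA neg_hom[OF se]] neg_comp[OF se h] h X A by simp
qed

lemma n_cokernel_exists_zero:
  assumes ic: "idempotent_complete C" and wc: "has_weak_cokernels C"
    and nk: "has_n_kernels C 0" and f: "f \<in> hom A A'"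
  shows "\<exists>Q c. is_n_cokernel C 0 A A' f Q c"
proof -
  have A: "A \<in> ob" "A' \<in> ob" using hom_ob[OF f] by blast+
  obtain W c0 where cok: "weak_cokernel C A A' f W c0"
    using wc f A unfolding has_weak_cokernels_def by blast
  have c0: "c0 \<in> hom A' W" "c0 \<cdot> f = zero A W" using cok unfolding weak_cokernel_def by blast+
  have W: "W \<in> ob" using hom_ob[OF c0(1)] by blast
  obtain B b where "is_n_kernel C 0 A' W c0 B b"
    using nk c0 A W unfolding has_n_kernels_def by blast
  then obtain e s where mono: "cat_mono C (B 0) W (b 0)" and c0_eq: "c0 = b 0 \<cdot> e"
    and e: "e \<in> hom A' (B 0)" and s: "s \<in> hom (B 0) A'" "e \<cdot> s = idm (B 0)"
    unfolding is_n_kernel_def split_epi_def by auto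
  have b0: "b 0 \<in> hom (B 0) W" using mono unfolding cat_mono_def by blast
  have "b 0 \<cdot> (e \<cdot> f) = b 0 \<cdot> zero A (B 0)"
    using comp_assoc[OF f e b0] c0 c0_eq comp_zero_right[OF b0 A(1)] by simp
  then have ef: "e \<cdot> f = zero A (B 0)"
    using mono A(1) comp_hom[OF f e] zero_hom hom_ob[OF b0] unfolding cat_mono_def by blast
  obtain q where q: "q \<in> hom A' A'" "e \<cdot> q = zero A' (B 0)"
    and q_fix: "\<And>X h. h \<in> hom X A' \<Longrightarrow> e \<cdot> h = zero X (B 0) \<Longrightarrow> q \<cdot> h = h"
    using split_epi_complement[OF e s] by blast
  obtain K k p where K: "K \<in> ob" and k: "k \<in> hom K A'" and p: "p \<in> hom A' K"
    and kp: "k \<cdot> p = q" and pk: "p \<cdot> k = idm K"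
    using ic q q_fix[OF q] A unfolding idempotent_complete_def by blast
  have "k \<cdot> (p \<cdot> f) = f" using comp_assoc[OF f p k] kp q_fix[OF f ef] by simp
  moreover have "split_mono C K A' k" using k p pk unfolding split_mono_def by blast
  moreover have "cat_epi C A K (p \<cdot> f)"
  proof (rule cat_epi_retract_comp[OF cok f k p pk])
    have "k = q \<cdot> k" using comp_assoc[OF k p k] kp pk k by simp
    then have "e \<cdot> k = zero K (B 0)" using comp_assoc[OF k q(1) e] q(2) comp_zero_left[OF k] hom_ob[OF e]
      by simp
    then show "c0 \<cdot> k = zero K W" using c0_eq comp_assoc[OF k e b0] comp_zero_right[OF b0 K] by simp
  qed
  ultimately have "is_n_cokernel C 0 A A' f (\<lambda>_. K) (\<lambda>_. p \<cdot> f)"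
    unfolding is_n_cokernel_def using K by auto
  then show ?thesis by blast
qed

lemma n_cokernel_exists_pos:
  assumes ic: "idempotent_complete C" and wc: "has_weak_cokernels C"
    and nk: "has_n_kernels C n" and n: "n \<noteq> 0" and f: "f \<in> hom A A'"
  shows "\<exists>Q c. is_n_cokernel C n A A' f Q c"
proof -
  obtain Y g where start: "Y 0 = A" "Y 1 = A'" "g 0 = f"
    and g: "\<And>k. g k \<in> hom (Y k) (Y (Suc k))"
    and cok: "\<And>k. weak_cokernel C (Y k) (Y (Suc k)) (g k) (Y (Suc (Suc k))) (g (Suc k))"
    using weak_cokernel_sequence[OF wc f] by blast
  obtain B b where "is_n_kernel C n (Y (Suc n)) (Y (Suc (Suc n))) (g (Suc n)) B b"
    using nk g hom_ob[OF g] unfolding has_n_kernels_def by blast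
  then obtain p where p: "p \<in> hom (Y (Suc n)) (Y (Suc n))" "p \<cdot> p = p" "p \<cdot> g n = g n"
    "g (Suc n) \<cdot> p = zero (Y (Suc n)) (Y (Suc (Suc n)))"
    using idempotent_from_n_kernel[where g = g and Y = Y, OF g cok n] by blast
  then obtain E i r where "i \<in> hom E (Y (Suc n))" "r \<in> hom (Y (Suc n)) E" "i \<cdot> r = p" "r \<cdot> i = idm E"
    using ic hom_ob[OF p(1)] unfolding idempotent_complete_def by blast
  then show ?thesis
    using n_cokernel_from_split_idempotent[where g = g and Y = Y, OF g cok n start] p by blast
qed

lemma has_n_cokernels_if_has_n_kernels:
  assumes "idempotent_complete C" "has_weak_cokernels C" "has_n_kernels C n"
  shows "has_n_cokernels C n"
proof (cases "n = 0")
  case True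
  then show ?thesis
    using n_cokernel_exists_zero[OF assms(1,2)] assms(3) unfolding has_n_cokernels_def by blast
next
  case False
  then show ?thesis
    using n_cokernel_exists_pos[OF assms] unfolding has_n_cokernels_def by blast
qed

end
definition op_cat :: "('o, 'm) precat \<Rightarrow> ('o, 'm) precat" where
  "op_cat C = \<lparr>cat_ob = cat_ob C, cat_hom = (\<lambda>A B. cat_hom C B A), cat_comp = (\<lambda>g f. cat_comp C f g),
     cat_id = cat_id C, cat_add = cat_add C, cat_zero = (\<lambda>A B. cat_zero C B A)\<rparr>"

lemma op_cat_simps [simp]:
  "cat_ob (op_cat C) = cat_ob C" "cat_hom (op_cat C) A B = cat_hom C B A"
  "cat_comp (op_cat C) g f = cat_comp C f g" "cat_id (op_cat C) = cat_id C"
  "cat_add (op_cat C) = cat_add C" "cat_zero (op_cat C) A B = cat_zero C B A"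
  by (simp_all add: op_cat_def)

lemma op_op_cat [simp]: "op_cat (op_cat C) = C"
  by (cases C) (simp add: op_cat_def)

lemma hom_group_op_cat [simp]: "hom_group (op_cat C) A B = hom_group C B A"
  by (simp add: hom_group_def)

lemma (in preadditive_category) preadditive_op_cat: "preadditive (op_cat C)"
  unfolding preadditive_def op_cat_simps hom_group_op_cat
  apply (intro conjI)
  subgoal using hom_ob by blast
  subgoal using hom_unique by blast
  subgoal using comp_hom by blast
  subgoal using comp_assoc by metis
  subgoal using id_hom by blast
  subgoal using id_left id_right by blast
  subgoal using hom_comm_group by blast
  subgoal using comp_distrib_right by blast
  subgoal using comp_distrib_left by blast
  done

lemma idempotent_complete_op_cat: "idempotent_complete C \<Longrightarrow> idempotent_complete (op_cat C)"
  unfolding idempotent_complete_def op_cat_simps by metis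

lemma has_weak_cokernels_op_cat: "has_weak_kernels C \<Longrightarrow> has_weak_cokernels (op_cat C)"
  unfolding has_weak_kernels_def has_weak_cokernels_def weak_kernel_def weak_cokernel_def op_cat_simps
  by blast

lemma n_kernel_op_cat_of_n_cokernel:
  assumes Q: "is_n_cokernel D n A A' f Q c"
  shows "\<exists>B b. is_n_kernel (op_cat D) n A' A f B b"
proof (cases "n = 0")
  case True
  then have "is_n_kernel (op_cat D) n A' A f Q c"
    using Q unfolding is_n_kernel_def is_n_cokernel_def cat_mono_def cat_epi_def split_epi_def
      split_mono_def by simp
  then show ?thesis by blast
next
  case False
  define B where "B i = Q (n + 1 - i)" for i
  define b where "b i = c (n - i)" for i
  have ob: "ker_ob n A' A B i = coker_ob A' Q (n + 1 - i)" if "1 \<le> i" "i \<le> n + 1" for i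
    using that by (auto simp: ker_ob_def coker_ob_def B_def)
  have shifted: "ker_ob n A' A B (Suc i) = coker_src A A' Q (n + 1 - i)"
    "ker_map n f b i = coker_map f c (n + 1 - i)"
    "B (i - 1) = Q (Suc (n + 1 - i))" "b (i - 1) = c (n + 1 - i)"
    if "2 \<le> i" "i \<le> n + 1" for i
    using that ob[of "Suc i"] by (auto simp: ker_ob_def ker_map_def coker_src_def coker_map_def B_def b_def
      Suc_diff_le)
  have "is_n_kernel (op_cat D) n A' A f B b"
    unfolding is_n_kernel_pos[OF False] op_cat_simps
  proof (intro conjI)
    show "\<forall>i \<in> {1..n}. B i \<in> cat_ob D \<and> b i \<in> cat_hom D (ker_ob n A' A B (Suc i)) (B i)"
      using Q ob unfolding is_n_cokernel_pos[OF False] by (auto simp: B_def b_def Suc_diff_le)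
    show "\<forall>X \<in> cat_ob D. \<forall>u \<in> cat_hom D (B 1) X.
        cat_comp D u (b 1) = cat_zero D (ker_ob n A' A B 2) X \<longrightarrow> u = cat_zero D (B 1) X"
      using Q ob[of 2] False unfolding is_n_cokernel_pos[OF False] by (simp add: B_def b_def)
    show "\<forall>X \<in> cat_ob D. \<forall>i \<in> {2..n+1}. \<forall>u \<in> cat_hom D (ker_ob n A' A B i) X.
        cat_comp D u (ker_map n f b i) = cat_zero D (ker_ob n A' A B (Suc i)) X \<longleftrightarrow>
        (\<exists>v \<in> cat_hom D (B (i - 1)) X. u = cat_comp D v (b (i - 1)))"
    proof (intro ballI)
      fix X i u assume "X \<in> cat_ob D" "i \<in> {2..n+1}" "u \<in> cat_hom D (ker_ob n A' A B i) X"
      then show "cat_comp D u (ker_map n f b i) = cat_zero D (ker_ob n A' A B (Suc i)) X \<longleftrightarrow>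
          (\<exists>v \<in> cat_hom D (B (i - 1)) X. u = cat_comp D v (b (i - 1)))"
        using Q ob[of i] shifted[of i] unfolding is_n_cokernel_pos[OF False] by auto
    qed
  qed
  then show ?thesis by blast
qed

lemma has_n_kernels_op_cat:
  assumes "has_n_cokernels D n"
  shows "has_n_kernels (op_cat D) n"
  unfolding has_n_kernels_def op_cat_simps
proof (intro ballI)
  fix A A' f assume "A \<in> cat_ob D" "A' \<in> cat_ob D" "f \<in> cat_hom D A' A"
  then obtain Q c where "is_n_cokernel D n A' A f Q c"
    using assms unfolding has_n_cokernels_def by blast
  then show "\<exists>B b. is_n_kernel (op_cat D) n A A' f B b" by (rule n_kernel_op_cat_of_n_cokernel)
qed

theorem theorem1:
  fixes C :: "('o, 'm) precat" and n :: nat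
  assumes "preadditive C"
    and "idempotent_complete C"
    and "has_weak_kernels C"
    and "has_weak_cokernels C"
  shows "has_n_kernels C n \<longleftrightarrow> has_n_cokernels C n"
proof -
  interpret preadditive_category C by unfold_locales (rule assms(1))
  interpret op: preadditive_category "op_cat C" by unfold_locales (rule preadditive_op_cat)
  have "has_n_kernels C n \<Longrightarrow> has_n_cokernels C n"
    using has_n_cokernels_if_has_n_kernels assms(2,4) by blast
  moreover have "has_n_kernels C n" if "has_n_cokernels C n"
  proof -
    have "has_n_kernels (op_cat C) n" using that by (rule has_n_kernels_op_cat)
    then have "has_n_cokernels (op_cat C) n"
      using op.has_n_cokernels_if_has_n_kernels idempotent_complete_op_cat[OF assms(2)]
        has_weak_cokernels_op_cat[OF assms(3)] by blast
    then show ?thesis using has_n_kernels_op_cat[of "op_cat C"] by simp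
  qed
  ultimately show ?thesis by blast
qed

end
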